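(* Let $(X,d)$ be a metric space, $\mu$ a non-atomic Borel measure on $X$, $m$ a Borel measure on $X$, $0<p<\infty$, and let $\Gamma^*\subset\Gamma^\mu$ be a family of paths closed under taking non-trivial subpaths such that any two points of $X$ are joined by a path in $\Gamma^*$. If $f,g\in\tilde N^{1,p}$ and $f=g$ $m$-almost everywhere, then $\|f-g\|_{N^{1,p}}=0$.
   Context: A path is a continuous map $\gamma:[a,b]\to X$; a subpath is a restriction to a subinterval, trivial if that interval is a point; $\mathrm{Im}(\gamma)=\gamma([a,b])$. $\mu$ non-atomic: $\mu(\{x\})=0$ for all $x$. $\Gamma^\mu$ is the set of all non-trivial injective paths $\gamma$ with $0<\mu(\mathrm{Im}(\tilde\gamma))<\infty$ for every non-trivial subpath $\tilde\gamma$. For Borel $g\ge0$, $\int_\gamma g:=\int_{\mathrm{Im}(\gamma)}g\,d\mu$. For $\Gamma\subset\Gamma^*$, $\mathrm{Mod}_p(\Gamma)=\inf\int_Xg^p\,dm$ over Borel $g\ge0$ with $\int_\gamma g\ge1$ for all $\gamma\in\Gamma$. A Borel $\rho\ge0$ is a $p$-weak upper gradient of $f$ if $|f(x)-f(y)|\le\int_\gamma\rho$ for all $\gamma\in\Gamma^*$ outside a family of $p$-modulus zero, $x,y$ being the endpoints of $\gamma$. $\tilde N^{1,p}$ is the set of $f\in L^p(m)$ having a $p$-weak upper gradient in $L^p(m)$, and $\|f\|_{N^{1,p}}=\|f\|_{L^p(m)}+\inf_\rho\|\rho\|_{L^p(m)}$, the infimum over all $p$-weak upper gradients $\rho$ of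 $f$. *)

theory Defs
  imports "HOL-Analysis.Analysis"
begin

text \<open>A path is represented as a triple (a, b, gamma) with a \<le> b and gamma continuous
  on [a,b]; only the values of gamma on [a,b] are relevant.\<close>

type_synonym 'a gpath = "real \<times> real \<times> (real \<Rightarrow> 'a)"

definition is_path :: "'a::metric_space gpath \<Rightarrow> bool" where
  "is_path P = (case P of (a, b, \<gamma>) \<Rightarrow> a \<le> b \<and> continuous_on {a..b} \<gamma>)"

definition path_image_g :: "'a gpath \<Rightarrow> 'a set" where
  "path_image_g P = (case P of (a, b, \<gamma>) \<Rightarrow> \<gamma> ` {a..b})"

definition start_pt :: "'a gpath \<Rightarrow> 'a" where
  "start_pt P = (case P of (a, b, \<gamma>) \<Rightarrow> \<gamma> a)"

definition end_pt :: "'a gpath \<Rightarrow> 'a" where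
  "end_pt P = (case P of (a, b, \<gamma>) \<Rightarrow> \<gamma> b)"

definition nontriv_subpaths :: "'a gpath \<Rightarrow> 'a gpath set" where
  "nontriv_subpaths P = (case P of (a, b, \<gamma>) \<Rightarrow> {(c, d, \<gamma>) | c d. a \<le> c \<and> c < d \<and> d \<le> b})"

definition borel_measure :: "'a::metric_space measure \<Rightarrow> bool" where
  "borel_measure M = (sets M = sets borel)"

definition non_atomic :: "'a measure \<Rightarrow> bool" where
  "non_atomic M = (\<forall>x. emeasure M {x} = 0)"

definition Gamma_mu :: "'a::metric_space measure \<Rightarrow> 'a gpath set" where
  "Gamma_mu \<mu> = {P. is_path P \<and> fst P < fst (snd P) \<and> inj_on (snd (snd P)) {fst P..fst (snd P)}
      \<and> (\<forall>Q\<in>nontriv_subpaths P. 0 < emeasure \<mu> (path_image_g Q) \<and> emeasure \<mu> (path_image_g Q) < \<infinity>)}"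

definition line_int :: "'a measure \<Rightarrow> ('a \<Rightarrow> ennreal) \<Rightarrow> 'a gpath \<Rightarrow> ennreal" where
  "line_int \<mu> g P = (\<integral>\<^sup>+ x. g x * indicator (path_image_g P) x \<partial>\<mu>)"

definition enn_powr :: "ennreal \<Rightarrow> real \<Rightarrow> ennreal" where
  "enn_powr x p = (if x = \<infinity> then \<infinity> else ennreal (enn2real x powr p))"

definition p_modulus :: "'a::metric_space measure \<Rightarrow> 'a measure \<Rightarrow> real \<Rightarrow> 'a gpath set \<Rightarrow> ennreal" where
  "p_modulus \<mu> m p \<Gamma> = (INF g \<in> {g. g \<in> borel_measurable borel \<and> (\<forall>P\<in>\<Gamma>. line_int \<mu> g P \<ge> 1)}.
       \<integral>\<^sup>+ x. enn_powr (g x) p \<partial>m)"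

definition p_weak_upper_gradient ::
  "'a::metric_space measure \<Rightarrow> 'a measure \<Rightarrow> real \<Rightarrow> 'a gpath set \<Rightarrow> ('a \<Rightarrow> real) \<Rightarrow> ('a \<Rightarrow> ennreal) \<Rightarrow> bool" where
  "p_weak_upper_gradient \<mu> m p \<Gamma>s f \<rho> =
     (\<rho> \<in> borel_measurable borel \<and>
      (\<exists>E \<subseteq> \<Gamma>s. p_modulus \<mu> m p E = 0 \<and>
         (\<forall>P \<in> \<Gamma>s - E. ennreal \<bar>f (start_pt P) - f (end_pt P)\<bar> \<le> line_int \<mu> \<rho> P)))"

definition Lp_norm :: "'a measure \<Rightarrow> real \<Rightarrow> ('a \<Rightarrow> ennreal) \<Rightarrow> ennreal" where
  "Lp_norm m p g = enn_powr (\<integral>\<^sup>+ x. enn_powr (g x) p \<partial>m) (1 / p)"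

definition in_Lp :: "'a measure \<Rightarrow> real \<Rightarrow> ('a \<Rightarrow> real) \<Rightarrow> bool" where
  "in_Lp m p f = (f \<in> borel_measurable m \<and> (\<integral>\<^sup>+ x. enn_powr (ennreal \<bar>f x\<bar>) p \<partial>m) < \<infinity>)"

definition N1p_tilde :: "'a::metric_space measure \<Rightarrow> 'a measure \<Rightarrow> real \<Rightarrow> 'a gpath set \<Rightarrow> ('a \<Rightarrow> real) set" where
  "N1p_tilde \<mu> m p \<Gamma>s = {f. in_Lp m p f \<and>
      (\<exists>\<rho>. p_weak_upper_gradient \<mu> m p \<Gamma>s f \<rho> \<and> (\<integral>\<^sup>+ x. enn_powr (\<rho> x) p \<partial>m) < \<infinity>)}"

definition N1p_norm :: "'a::metric_space measure \<Rightarrow> 'a measure \<Rightarrow> real \<Rightarrow> 'a gpath set \<Rightarrow> ('a \<Rightarrow> real) \<Rightarrow> ennreal" where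
  "N1p_norm \<mu> m p \<Gamma>s f = Lp_norm m p (\<lambda>x. ennreal \<bar>f x\<bar>)
      + (INF \<rho> \<in> {\<rho>. p_weak_upper_gradient \<mu> m p \<Gamma>s f \<rho>}. Lp_norm m p \<rho>)"

end

theory Submission
  imports Defs
begin

text \<open>Let \<open>h = f - g\<close> and let \<open>N \<supseteq> {f \<noteq> g}\<close> be an \<open>m\<close>-null Borel set. The paths whose
  image meets \<open>N\<close> in positive \<open>\<mu>\<close>-measure have \<open>p\<close>-modulus zero (test with \<open>\<infinity> \<cdot> 1\<^sub>N\<close>), and so
  do the paths along which an upper gradient \<open>\<rho>\<^sub>f\<close>, \<open>\<rho>\<^sub>g\<close> has infinite line integral or which
  contain a subpath exceptional for \<open>f\<close> or \<open>g\<close>. Off these families \<open>\<rho> = \<rho>\<^sub>f + \<rho>\<^sub>g\<close> is an upper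
  gradient of \<open>h\<close> on every subpath and \<open>h = 0\<close> \<open>\<mu>\<close>-a.e. on the image. Every initial arc has
  positive \<open>\<mu>\<close>-measure, hence contains a zero of \<open>h\<close>, so \<open>|h(\<gamma>(a))|\<close> is at most the integral
  of \<open>\<rho>\<close> over arbitrarily short initial arcs; these shrink to the \<open>\<mu>\<close>-null point \<open>\<gamma>(a)\<close>, so
  \<open>h(\<gamma>(a)) = 0\<close>, and likewise at the other end. Thus \<open>0\<close> is a \<open>p\<close>-weak upper gradient of
  \<open>h\<close>, and \<open>h = 0\<close> \<open>m\<close>-a.e.\<close>

lemma enn_powr_measurable[measurable]:
  assumes [measurable]: "g \<in> borel_measurable M"
  shows "(\<lambda>x. enn_powr (g x) p) \<in> borel_measurable M"
  unfolding enn_powr_def by measurable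

lemma enn_powr_0: "0 < p \<Longrightarrow> enn_powr 0 p = 0"
  by (simp add: enn_powr_def)

lemma enn_powr_mult_ennreal:
  "0 < p \<Longrightarrow> 0 < e \<Longrightarrow> enn_powr (a * ennreal e) p = enn_powr a p * ennreal (e powr p)"
  unfolding enn_powr_def
  by (cases a) (auto simp: powr_mult ennreal_mult[symmetric] ennreal_mult_top ennreal_top_mult)

lemma Lp_norm_eq_0_if_AE_zero:
  assumes "0 < p" "AE x in m. g x = 0"
  shows "Lp_norm m p g = 0"
proof -
  have "(\<integral>\<^sup>+x. enn_powr (g x) p \<partial>m) = (\<integral>\<^sup>+x. 0 \<partial>m)"
    using assms by (intro nn_integral_cong_AE) (auto simp: enn_powr_0 elim!: AE_mp)
  then show ?thesis
    using assms(1) by (simp add: Lp_norm_def enn_powr_def)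
qed

lemma N1p_norm_eq_0I:
  assumes "0 < p" "AE x in m. f x = 0" "p_weak_upper_gradient \<mu> m p \<Gamma>s f (\<lambda>x. 0)"
  shows "N1p_norm \<mu> m p \<Gamma>s f = 0"
proof -
  have "(INF \<rho> \<in> {\<rho>. p_weak_upper_gradient \<mu> m p \<Gamma>s f \<rho>}. Lp_norm m p \<rho>) \<le> Lp_norm m p (\<lambda>x. 0)"
    using assms(3) by (intro INF_lower) simp
  moreover have "Lp_norm m p (\<lambda>x. 0) = 0" "Lp_norm m p (\<lambda>x. ennreal \<bar>f x\<bar>) = 0"
    using assms(1,2) by (auto intro!: Lp_norm_eq_0_if_AE_zero elim!: AE_mp)
  ultimately show ?thesis
    by (simp add: N1p_norm_def)
qed

lemma arc_image_in_sets:
  fixes \<gamma> :: "real \<Rightarrow> 'a::metric_space"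
  assumes "sets \<mu> = sets borel" "continuous_on {c..d} \<gamma>"
  shows "\<gamma> ` {c..d} \<in> sets \<mu>"
  using assms by (simp add: borel_closed compact_continuous_image compact_imp_closed)

lemma path_image_g_in_sets: "sets \<mu> = sets borel \<Longrightarrow> is_path P \<Longrightarrow> path_image_g P \<in> sets \<mu>"
  by (cases P) (simp add: is_path_def path_image_g_def arc_image_in_sets)

lemma path_image_g_subpath: "Q \<in> nontriv_subpaths P \<Longrightarrow> path_image_g Q \<subseteq> path_image_g P"
  by (cases P) (auto simp: nontriv_subpaths_def path_image_g_def)

lemma line_int_mono_image:
  "path_image_g Q \<subseteq> path_image_g P \<Longrightarrow> line_int \<mu> g Q \<le> line_int \<mu> g P"
  unfolding line_int_def by (intro nn_integral_mono) (auto split: split_indicator)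

lemma line_int_mono:
  "(\<And>x. g x \<le> h x) \<Longrightarrow> line_int \<mu> g Q \<le> line_int \<mu> h Q"
  unfolding line_int_def by (intro nn_integral_mono) (auto split: split_indicator)

lemma line_int_add:
  assumes "sets \<mu> = sets borel" "is_path Q"
    and [measurable]: "\<rho> \<in> borel_measurable borel" "\<sigma> \<in> borel_measurable borel"
  shows "line_int \<mu> (\<lambda>x. \<rho> x + \<sigma> x) Q = line_int \<mu> \<rho> Q + line_int \<mu> \<sigma> Q"
proof -
  have [measurable]: "path_image_g Q \<in> sets borel"
    using path_image_g_in_sets[OF assms(1,2)] assms(1) by simp
  have [measurable_cong]: "sets \<mu> = sets borel" by (fact assms(1))
  show ?thesis
    unfolding line_int_def distrib_right by (rule nn_integral_add) auto
qed

lemma line_int_mult_const: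
  assumes "sets \<mu> = sets borel" "is_path Q" "\<rho> \<in> borel_measurable borel"
  shows "line_int \<mu> (\<lambda>x. \<rho> x * c) Q = line_int \<mu> \<rho> Q * c"
proof -
  have [measurable]: "path_image_g Q \<in> sets borel" "\<rho> \<in> borel_measurable borel"
    using path_image_g_in_sets[OF assms(1,2)] assms by simp_all
  have [measurable_cong]: "sets \<mu> = sets borel" by (fact assms(1))
  show ?thesis
    unfolding line_int_def by (subst nn_integral_multc[symmetric]) (auto simp: mult_ac)
qed

section \<open>Modulus of path families\<close>

definition admissible :: "'a::metric_space measure \<Rightarrow> 'a gpath set \<Rightarrow> ('a \<Rightarrow> ennreal) \<Rightarrow> bool" where
  "admissible \<mu> \<Gamma> g \<longleftrightarrow> g \<in> borel_measurable borel \<and> (\<forall>P\<in>\<Gamma>. 1 \<le> line_int \<mu> g P)"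

lemma p_modulus_le: "admissible \<mu> \<Gamma> g \<Longrightarrow> p_modulus \<mu> m p \<Gamma> \<le> (\<integral>\<^sup>+x. enn_powr (g x) p \<partial>m)"
  unfolding p_modulus_def admissible_def by (rule INF_lower) simp

lemma p_modulus_eq_0_iff:
  "p_modulus \<mu> m p \<Gamma> = 0 \<longleftrightarrow>
     (\<forall>e>0. \<exists>g. admissible \<mu> \<Gamma> g \<and> (\<integral>\<^sup>+x. enn_powr (g x) p \<partial>m) < ennreal e)"
proof
  assume "p_modulus \<mu> m p \<Gamma> = 0"
  then have "p_modulus \<mu> m p \<Gamma> < ennreal e" if "0 < e" for e
    using that by simp
  then show "\<forall>e>0. \<exists>g. admissible \<mu> \<Gamma> g \<and> (\<integral>\<^sup>+x. enn_powr (g x) p \<partial>m) < ennreal e"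
    unfolding p_modulus_def admissible_def INF_less_iff by blast
next
  assume small: "\<forall>e>0. \<exists>g. admissible \<mu> \<Gamma> g \<and> (\<integral>\<^sup>+x. enn_powr (g x) p \<partial>m) < ennreal e"
  have "p_modulus \<mu> m p \<Gamma> \<le> 0 + ennreal e" if "0 < e" for e
  proof -
    obtain g where "admissible \<mu> \<Gamma> g" "(\<integral>\<^sup>+x. enn_powr (g x) p \<partial>m) < ennreal e"
      using small \<open>0 < e\<close> by blast
    then show ?thesis
      using p_modulus_le[of \<mu> \<Gamma> g m p] by simp
  qed
  then have "p_modulus \<mu> m p \<Gamma> \<le> 0"
    by (rule ennreal_le_epsilon)
  then show "p_modulus \<mu> m p \<Gamma> = 0"
    by simp
qed

lemma p_modulus_eq_0_if_minorized:
  assumes "p_modulus \<mu> m p E = 0"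
    and "\<And>P. P \<in> \<Gamma> \<Longrightarrow> \<exists>Q\<in>E. path_image_g Q \<subseteq> path_image_g P"
  shows "p_modulus \<mu> m p \<Gamma> = 0"
proof -
  have "admissible \<mu> \<Gamma> g" if "admissible \<mu> E g" for g
    using that assms(2) unfolding admissible_def by (fastforce intro: order_trans line_int_mono_image)
  with assms(1) show ?thesis
    unfolding p_modulus_eq_0_iff by blast
qed

lemma p_modulus_subset_eq_0: "p_modulus \<mu> m p \<Gamma> = 0 \<Longrightarrow> \<Gamma>' \<subseteq> \<Gamma> \<Longrightarrow> p_modulus \<mu> m p \<Gamma>' = 0"
  by (erule p_modulus_eq_0_if_minorized) auto

lemma admissible_max:
  "admissible \<mu> \<Gamma>\<^sub>1 g\<^sub>1 \<Longrightarrow> admissible \<mu> \<Gamma>\<^sub>2 g\<^sub>2 \<Longrightarrow> admissible \<mu> (\<Gamma>\<^sub>1 \<union> \<Gamma>\<^sub>2) (\<lambda>x. max (g\<^sub>1 x) (g\<^sub>2 x))"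
  unfolding admissible_def
  by (auto intro: order_trans[OF _ line_int_mono] borel_measurable_max)

lemma p_modulus_Un_eq_0:
  assumes "sets m = sets borel" "p_modulus \<mu> m p \<Gamma>\<^sub>1 = 0" "p_modulus \<mu> m p \<Gamma>\<^sub>2 = 0"
  shows "p_modulus \<mu> m p (\<Gamma>\<^sub>1 \<union> \<Gamma>\<^sub>2) = 0"
  unfolding p_modulus_eq_0_iff
proof (intro allI impI)
  fix e :: real assume "0 < e"
  then obtain g\<^sub>1 g\<^sub>2 where g:
      "admissible \<mu> \<Gamma>\<^sub>1 g\<^sub>1" "(\<integral>\<^sup>+x. enn_powr (g\<^sub>1 x) p \<partial>m) < ennreal (e/2)"
      "admissible \<mu> \<Gamma>\<^sub>2 g\<^sub>2" "(\<integral>\<^sup>+x. enn_powr (g\<^sub>2 x) p \<partial>m) < ennreal (e/2)"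
    using assms(2,3) unfolding p_modulus_eq_0_iff by (meson half_gt_zero)
  have meas: "(\<lambda>x. enn_powr (g\<^sub>1 x) p) \<in> borel_measurable m" "(\<lambda>x. enn_powr (g\<^sub>2 x) p) \<in> borel_measurable m"
    using g(1,3) assms(1) by (auto simp: admissible_def measurable_cong_sets[OF assms(1) refl])
  have "(\<integral>\<^sup>+x. enn_powr (max (g\<^sub>1 x) (g\<^sub>2 x)) p \<partial>m)
      \<le> (\<integral>\<^sup>+x. enn_powr (g\<^sub>1 x) p + enn_powr (g\<^sub>2 x) p \<partial>m)"
    by (intro nn_integral_mono) (simp add: max_def add_increasing add_increasing2)
  also have "\<dots> = (\<integral>\<^sup>+x. enn_powr (g\<^sub>1 x) p \<partial>m) + (\<integral>\<^sup>+x. enn_powr (g\<^sub>2 x) p \<partial>m)"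
    using meas by (rule nn_integral_add)
  also have "\<dots> < ennreal (e/2) + ennreal (e/2)"
    using g(2,4) by (rule add_strict_mono)
  also have "\<dots> = ennreal e"
    using \<open>0 < e\<close> by (simp flip: ennreal_plus)
  finally show "\<exists>g. admissible \<mu> (\<Gamma>\<^sub>1 \<union> \<Gamma>\<^sub>2) g \<and> (\<integral>\<^sup>+x. enn_powr (g x) p \<partial>m) < ennreal e"
    using admissible_max[OF g(1,3)] by blast
qed

lemma p_modulus_paths_meeting_null_set:
  assumes "sets \<mu> = sets borel" "sets m = sets borel" "0 < p"
    and "N \<in> sets m" "emeasure m N = 0"
  shows "p_modulus \<mu> m p {P. is_path P \<and> emeasure \<mu> (path_image_g P \<inter> N) \<noteq> 0} = 0"
proof -
  define g :: "'a \<Rightarrow> ennreal" where "g x = \<infinity> * indicator N x" for x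
  have N: "N \<in> sets borel" "N \<in> sets \<mu>"
    using assms by simp_all
  have "line_int \<mu> g P = \<infinity>" if "is_path P" "emeasure \<mu> (path_image_g P \<inter> N) \<noteq> 0" for P
  proof -
    have "line_int \<mu> g P = (\<integral>\<^sup>+x. \<infinity> * indicator (path_image_g P \<inter> N) x \<partial>\<mu>)"
      unfolding line_int_def g_def by (intro nn_integral_cong) (auto split: split_indicator)
    also have "\<dots> = \<infinity>"
    proof -
      have "path_image_g P \<inter> N \<in> sets \<mu>"
        using path_image_g_in_sets[OF assms(1) that(1)] N by blast
      then show ?thesis
        using that(2) by (simp only: nn_integral_cmult_indicator) (simp add: ennreal_top_mult)
    qed
    finally show ?thesis .
  qed
  then have "admissible \<mu> {P. is_path P \<and> emeasure \<mu> (path_image_g P \<inter> N) \<noteq> 0} g"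
    using N unfolding admissible_def g_def by (auto intro: borel_measurable_indicator)
  then have "p_modulus \<mu> m p {P. is_path P \<and> emeasure \<mu> (path_image_g P \<inter> N) \<noteq> 0}
      \<le> (\<integral>\<^sup>+x. enn_powr (g x) p \<partial>m)"
    by (rule p_modulus_le)
  also have "\<dots> = (\<integral>\<^sup>+x. \<infinity> * indicator N x \<partial>m)"
    unfolding g_def using assms(3)
    by (intro nn_integral_cong) (auto split: split_indicator simp: enn_powr_def)
  also have "\<dots> = 0"
    using assms(4,5) by (simp only: nn_integral_cmult_indicator) simp
  finally show ?thesis
    by simp
qed

lemma p_modulus_paths_infinite_line_int:
  assumes "sets \<mu> = sets borel" "sets m = sets borel" "0 < p"
    and \<rho>: "\<rho> \<in> borel_measurable borel" and fin: "(\<integral>\<^sup>+x. enn_powr (\<rho> x) p \<partial>m) < \<infinity>"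
  shows "p_modulus \<mu> m p {P. is_path P \<and> line_int \<mu> \<rho> P = \<infinity>} = 0"
proof -
  let ?\<Gamma> = "{P. is_path P \<and> line_int \<mu> \<rho> P = \<infinity>}"
  obtain I where I: "(\<integral>\<^sup>+x. enn_powr (\<rho> x) p \<partial>m) = ennreal I" "0 \<le> I"
    using fin by (cases "\<integral>\<^sup>+x. enn_powr (\<rho> x) p \<partial>m") auto
  have \<rho>_m: "(\<lambda>x. enn_powr (\<rho> x) p) \<in> borel_measurable m"
    using \<rho> by (simp add: measurable_cong_sets[OF assms(2) refl])
  have scaled: "p_modulus \<mu> m p ?\<Gamma> \<le> ennreal (c powr p * I)" if "0 < c" for c
  proof -
    have "line_int \<mu> (\<lambda>x. \<rho> x * ennreal c) P = \<infinity>" if "P \<in> ?\<Gamma>" for P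
      using that \<open>0 < c\<close> line_int_mult_const[OF assms(1) _ \<rho>, of P "ennreal c"]
      by (simp add: ennreal_top_mult)
    then have "admissible \<mu> ?\<Gamma> (\<lambda>x. \<rho> x * ennreal c)"
      using \<rho> unfolding admissible_def by simp
    then have "p_modulus \<mu> m p ?\<Gamma> \<le> (\<integral>\<^sup>+x. enn_powr (\<rho> x * ennreal c) p \<partial>m)"
      by (rule p_modulus_le)
    also have "\<dots> = (\<integral>\<^sup>+x. enn_powr (\<rho> x) p * ennreal (c powr p) \<partial>m)"
      using assms(3) \<open>0 < c\<close> by (simp only: enn_powr_mult_ennreal)
    also have "\<dots> = ennreal I * ennreal (c powr p)"
      using \<rho>_m I(1) by (simp only: nn_integral_multc)
    also have "\<dots> = ennreal (c powr p * I)"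
      using I(2) by (simp add: ennreal_mult' mult.commute)
    finally show ?thesis .
  qed
  have "p_modulus \<mu> m p ?\<Gamma> \<le> 0 + ennreal e" if "0 < e" for e
  proof -
    define c where "c = (e / (I + 1)) powr (1 / p)"
    have "c powr p * I = e * (I / (I + 1))"
      using \<open>0 < e\<close> I(2) assms(3) by (simp add: c_def powr_powr)
    also have "\<dots> \<le> e"
      using \<open>0 < e\<close> I(2) by (intro mult_left_le) auto
    finally have "ennreal (c powr p * I) \<le> ennreal e"
      by (rule ennreal_leI)
    moreover have "0 < c"
      using \<open>0 < e\<close> I(2) by (simp add: c_def)
    ultimately show ?thesis
      using scaled[of c] by simp
  qed
  then have "p_modulus \<mu> m p ?\<Gamma> \<le> 0"
    by (rule ennreal_le_epsilon)
  then show ?thesis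
    by simp
qed

section \<open>Values at the endpoints of arcs\<close>

lemma INF_nn_integral_shrinking_to_null_point:
  assumes \<rho>: "\<rho> \<in> borel_measurable \<mu>" and S: "\<And>n. S n \<in> sets \<mu>" "decseq S"
    and lim: "(\<Inter>n. S n) = {x}" and null: "emeasure \<mu> {x} = 0"
    and fin: "(\<integral>\<^sup>+y. \<rho> y * indicator (S 0) y \<partial>\<mu>) < \<infinity>"
  shows "(INF n. \<integral>\<^sup>+y. \<rho> y * indicator (S n) y \<partial>\<mu>) = 0"
proof -
  have "(INF n. \<integral>\<^sup>+y. \<rho> y * indicator (S n) y \<partial>\<mu>) = (\<integral>\<^sup>+y. (INF n. \<rho> y * indicator (S n) y) \<partial>\<mu>)"
  proof (rule nn_integral_monotone_convergence_INF_AE[where i=0, symmetric])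
    show "AE y in \<mu>. \<rho> y * indicator (S (Suc n)) y \<le> \<rho> y * indicator (S n) y" for n
      using decseq_SucD[OF S(2)] by (auto split: split_indicator)
  qed (use \<rho> S(1) fin in auto)
  also have "\<dots> = (\<integral>\<^sup>+y. \<rho> x * indicator {x} y \<partial>\<mu>)"
  proof (intro nn_integral_cong)
    fix y
    show "(INF n. \<rho> y * indicator (S n) y) = \<rho> x * indicator {x} y"
    proof (cases "y = x")
      case True
      then have "y \<in> S n" for n
        using lim by blast
      then show ?thesis
        using True by simp
    next
      case False
      then obtain n where "y \<notin> S n"
        using lim by blast
      then have "(INF n. \<rho> y * indicator (S n) y) \<le> 0"
        by (intro INF_lower2[of n]) auto
      then show ?thesis
        using False by simp
    qed
  qed
  also have "\<dots> = 0"
  proof -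
    have "{x} \<in> sets \<mu>"
      unfolding lim[symmetric] using S(1) by (intro sets.countable_INT) auto
    then show ?thesis
      using null by (simp add: nn_integral_cmult_indicator)
  qed
  finally show ?thesis .
qed

lemma INT_initial_arcs:
  fixes \<gamma> :: "real \<Rightarrow> 'a"
  assumes inj: "inj_on \<gamma> {a..b}" and "a < b"
  shows "(\<Inter>n. \<gamma> ` {a..a + (b - a) / Suc n}) = {\<gamma> a}"
proof
  define t where "t n = a + (b - a) / Suc n" for n
  have t: "a < t n" "t n \<le> b" for n
    using \<open>a < b\<close> by (auto simp: t_def field_simps intro: mult_right_mono)
  have "t \<longlonglongrightarrow> a + 0"
    unfolding t_def by (intro tendsto_add tendsto_const LIMSEQ_Suc[OF lim_const_over_n])
  then have t_lim: "t \<longlonglongrightarrow> a"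
    by simp
  show "(\<Inter>n. \<gamma> ` {a..t n}) \<subseteq> {\<gamma> a}"
  proof
    fix y assume y: "y \<in> (\<Inter>n. \<gamma> ` {a..t n})"
    then obtain s where s: "s \<in> {a..t 0}" "y = \<gamma> s"
      by blast
    have "s \<le> t n" for n
    proof -
      obtain s' where "s' \<in> {a..t n}" "y = \<gamma> s'"
        using y by blast
      moreover have "s' = s"
        using inj calculation s t[of n] t[of 0] unfolding inj_on_def by auto
      ultimately show ?thesis
        by simp
    qed
    then have "s \<le> a"
      using LIMSEQ_le_const[OF t_lim] by blast
    then show "y \<in> {\<gamma> a}"
      using s by simp
  qed
  show "{\<gamma> a} \<subseteq> (\<Inter>n. \<gamma> ` {a..t n})"
    using t by (auto intro!: imageI less_imp_le)
qed

lemma AE_imp_ex_in_positive_set: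
  assumes "AE x in M. x \<in> S \<longrightarrow> P x" "0 < emeasure M S"
  shows "\<exists>x\<in>S. P x"
proof (rule ccontr)
  assume "\<not> (\<exists>x\<in>S. P x)"
  then have "AE x in M. x \<notin> S"
    using assms(1) by auto
  then have "emeasure M {x \<in> space M. x \<in> S} = 0"
    by (rule emeasure_eq_0_AE)
  moreover have "{x \<in> space M. x \<in> S} = S"
    using assms(2) emeasure_notin_sets[of S M] sets.sets_into_space[of S M] by fastforce
  ultimately show False
    using assms(2) by simp
qed

lemma arc_start_value_eq_0:
  fixes \<gamma> :: "real \<Rightarrow> 'a::metric_space" and h :: "'a \<Rightarrow> real"
  assumes sets_\<mu>: "sets \<mu> = sets borel" and null: "emeasure \<mu> {\<gamma> a} = 0"
    and \<rho>: "\<rho> \<in> borel_measurable borel"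
    and "a < b" and cont: "continuous_on {a..b} \<gamma>" and inj: "inj_on \<gamma> {a..b}"
    and pos: "\<And>s. a < s \<Longrightarrow> s \<le> b \<Longrightarrow> 0 < emeasure \<mu> (\<gamma> ` {a..s})"
    and h_AE: "AE y in \<mu>. y \<in> \<gamma> ` {a..b} \<longrightarrow> h y = 0"
    and fin: "(\<integral>\<^sup>+y. \<rho> y * indicator (\<gamma> ` {a..b}) y \<partial>\<mu>) < \<infinity>"
    and ug: "\<And>s. a < s \<Longrightarrow> s \<le> b \<Longrightarrow>
        ennreal \<bar>h (\<gamma> a) - h (\<gamma> s)\<bar> \<le> (\<integral>\<^sup>+y. \<rho> y * indicator (\<gamma> ` {a..s}) y \<partial>\<mu>)"
  shows "h (\<gamma> a) = 0"
proof -
  define t where "t n = a + (b - a) / Suc n" for n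
  have t: "a < t n" "t n \<le> b" for n
    using \<open>a < b\<close> by (auto simp: t_def field_simps intro: mult_right_mono)
  define S where "S n = \<gamma> ` {a..t n}" for n
  have bound: "ennreal \<bar>h (\<gamma> a)\<bar> \<le> (\<integral>\<^sup>+y. \<rho> y * indicator (S n) y \<partial>\<mu>)" for n
  proof -
    have "AE y in \<mu>. y \<in> S n \<longrightarrow> h y = 0"
      using h_AE
    proof eventually_elim
      case (elim y)
      then show ?case
        using t[of n] by (auto simp: S_def)
    qed
    then have "\<exists>y\<in>S n. h y = 0"
      using pos[OF t] unfolding S_def by (rule AE_imp_ex_in_positive_set)
    then obtain s where s: "s \<in> {a..t n}" "h (\<gamma> s) = 0"
      unfolding S_def by blast
    show ?thesis
    proof (cases "s = a")
      case False
      then have "ennreal \<bar>h (\<gamma> a)\<bar> \<le> (\<integral>\<^sup>+y. \<rho> y * indicator (\<gamma> ` {a..s}) y \<partial>\<mu>)"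
        using ug[of s] s t[of n] by simp
      also have "\<dots> \<le> (\<integral>\<^sup>+y. \<rho> y * indicator (S n) y \<partial>\<mu>)"
        unfolding S_def using s by (intro nn_integral_mono) (auto split: split_indicator)
      finally show ?thesis .
    qed (use s in simp)
  qed
  have "(INF n. \<integral>\<^sup>+y. \<rho> y * indicator (S n) y \<partial>\<mu>) = 0"
  proof (rule INF_nn_integral_shrinking_to_null_point)
    show "\<rho> \<in> borel_measurable \<mu>"
      using \<rho> by (simp add: measurable_cong_sets[OF sets_\<mu> refl])
    show "S n \<in> sets \<mu>" for n
      unfolding S_def using t[of n] by (intro arc_image_in_sets[OF sets_\<mu>] continuous_on_subset[OF cont]) auto
    show "decseq S"
      unfolding S_def t_def by (intro decseq_SucI image_mono) (auto simp: field_simps)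
    show "(\<Inter>n. S n) = {\<gamma> a}"
      unfolding S_def t_def by (rule INT_initial_arcs[OF inj \<open>a < b\<close>])
    show "(\<integral>\<^sup>+y. \<rho> y * indicator (S 0) y \<partial>\<mu>) < \<infinity>"
      using fin by (simp add: S_def t_def)
  qed (fact null)
  moreover have "ennreal \<bar>h (\<gamma> a)\<bar> \<le> (INF n. \<integral>\<^sup>+y. \<rho> y * indicator (S n) y \<partial>\<mu>)"
    using bound by (rule INF_greatest)
  ultimately have "ennreal \<bar>h (\<gamma> a)\<bar> \<le> 0"
    by simp
  then show ?thesis
    by simp
qed

lemma image_reflected_interval: "(\<lambda>t. \<gamma> (- t)) ` {c..d} = \<gamma> ` {- d..- (c::real)}"
  by (metis image_image image_uminus_atLeastAtMost)

lemma arc_end_value_eq_0: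
  fixes \<gamma> :: "real \<Rightarrow> 'a::metric_space" and h :: "'a \<Rightarrow> real"
  assumes sets_\<mu>: "sets \<mu> = sets borel" and null: "emeasure \<mu> {\<gamma> b} = 0"
    and \<rho>: "\<rho> \<in> borel_measurable borel"
    and "a < b" and cont: "continuous_on {a..b} \<gamma>" and inj: "inj_on \<gamma> {a..b}"
    and pos: "\<And>s. a \<le> s \<Longrightarrow> s < b \<Longrightarrow> 0 < emeasure \<mu> (\<gamma> ` {s..b})"
    and h_AE: "AE y in \<mu>. y \<in> \<gamma> ` {a..b} \<longrightarrow> h y = 0"
    and fin: "(\<integral>\<^sup>+y. \<rho> y * indicator (\<gamma> ` {a..b}) y \<partial>\<mu>) < \<infinity>"
    and ug: "\<And>s. a \<le> s \<Longrightarrow> s < b \<Longrightarrow>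
        ennreal \<bar>h (\<gamma> s) - h (\<gamma> b)\<bar> \<le> (\<integral>\<^sup>+y. \<rho> y * indicator (\<gamma> ` {s..b}) y \<partial>\<mu>)"
  shows "h (\<gamma> b) = 0"
proof -
  have "h ((\<lambda>t. \<gamma> (- t)) (- b)) = 0"
  proof (rule arc_start_value_eq_0[OF sets_\<mu> _ \<rho>, where \<gamma> = "\<lambda>t. \<gamma> (- t)" and a = "- b" and b = "- a"])
    show "continuous_on {- b..- a} (\<lambda>t. \<gamma> (- t))"
      by (rule continuous_on_compose2[OF cont]) (auto intro!: continuous_intros)
    show "inj_on (\<lambda>t. \<gamma> (- t)) {- b..- a}"
      using inj unfolding inj_on_def by force
    show "ennreal \<bar>h (\<gamma> (- (- b))) - h (\<gamma> (- s))\<bar>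
        \<le> (\<integral>\<^sup>+y. \<rho> y * indicator ((\<lambda>t. \<gamma> (- t)) ` {- b..s}) y \<partial>\<mu>)"
      if "- b < s" "s \<le> - a" for s
      unfolding image_reflected_interval using ug[of "- s"] that by (simp add: abs_minus_commute)
  qed (use \<open>a < b\<close> null pos h_AE fin in \<open>simp_all add: image_reflected_interval\<close>)
  then show ?thesis
    by simp
qed

lemma Gamma_mu_endpoint_values_eq_0:
  assumes sets_\<mu>: "sets \<mu> = sets borel" and "non_atomic \<mu>" and \<rho>: "\<rho> \<in> borel_measurable borel"
    and P: "P \<in> Gamma_mu \<mu>"
    and h_AE: "AE y in \<mu>. y \<in> path_image_g P \<longrightarrow> h y = 0"
    and fin: "line_int \<mu> \<rho> P < \<infinity>"
    and ug: "\<And>Q. Q \<in> nontriv_subpaths P \<Longrightarrow>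
        ennreal \<bar>h (start_pt Q) - h (end_pt Q)\<bar> \<le> line_int \<mu> \<rho> Q"
  shows "h (start_pt P) = 0" "h (end_pt P) = 0"
proof -
  obtain a b \<gamma> where P_eq: "P = (a, b, \<gamma>)"
    by (cases P) auto
  have "a < b" and cont: "continuous_on {a..b} \<gamma>" and inj: "inj_on \<gamma> {a..b}"
    using P by (auto simp: Gamma_mu_def P_eq is_path_def)
  have sub: "(c, d, \<gamma>) \<in> nontriv_subpaths P" if "a \<le> c" "c < d" "d \<le> b" for c d
    using that by (auto simp: P_eq nontriv_subpaths_def)
  have pos: "0 < emeasure \<mu> (\<gamma> ` {c..d})" if "a \<le> c" "c < d" "d \<le> b" for c d
    using P sub[OF that] by (auto simp: Gamma_mu_def path_image_g_def)
  have ug_arc: "ennreal \<bar>h (\<gamma> c) - h (\<gamma> d)\<bar> \<le> (\<integral>\<^sup>+y. \<rho> y * indicator (\<gamma> ` {c..d}) y \<partial>\<mu>)"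
    if "a \<le> c" "c < d" "d \<le> b" for c d
    using ug[OF sub[OF that]] by (simp add: line_int_def path_image_g_def start_pt_def end_pt_def)
  have null: "emeasure \<mu> {x} = 0" for x
    using \<open>non_atomic \<mu>\<close> by (simp add: non_atomic_def)
  have h_AE': "AE y in \<mu>. y \<in> \<gamma> ` {a..b} \<longrightarrow> h y = 0"
    and fin': "(\<integral>\<^sup>+y. \<rho> y * indicator (\<gamma> ` {a..b}) y \<partial>\<mu>) < \<infinity>"
    using h_AE fin by (simp_all add: P_eq path_image_g_def line_int_def)
  have "h (\<gamma> a) = 0"
    by (rule arc_start_value_eq_0[OF sets_\<mu> null \<rho> \<open>a < b\<close> cont inj pos h_AE' fin' ug_arc]) auto
  moreover have "h (\<gamma> b) = 0"
    by (rule arc_end_value_eq_0[OF sets_\<mu> null \<rho> \<open>a < b\<close> cont inj pos h_AE' fin' ug_arc]) auto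
  ultimately show "h (start_pt P) = 0" "h (end_pt P) = 0"
    by (simp_all add: P_eq start_pt_def end_pt_def)
qed

section \<open>Weak upper gradients of a.e. equal functions\<close>

lemma p_modulus_paths_with_subpath_in:
  "p_modulus \<mu> m p E = 0 \<Longrightarrow> p_modulus \<mu> m p {P. \<exists>Q\<in>nontriv_subpaths P. Q \<in> E} = 0"
  by (erule p_modulus_eq_0_if_minorized) (auto dest: path_image_g_subpath)

lemma ennreal_abs_diff_diff_le:
  fixes u v u' v' :: real
  assumes "ennreal \<bar>u - u'\<bar> \<le> A" "ennreal \<bar>v - v'\<bar> \<le> B"
  shows "ennreal \<bar>(u - v) - (u' - v')\<bar> \<le> A + B"
proof -
  have "ennreal \<bar>(u - v) - (u' - v')\<bar> \<le> ennreal (\<bar>u - u'\<bar> + \<bar>v - v'\<bar>)"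
    by (intro ennreal_leI) linarith
  also have "\<dots> = ennreal \<bar>u - u'\<bar> + ennreal \<bar>v - v'\<bar>"
    by (simp add: ennreal_plus)
  also have "\<dots> \<le> A + B"
    using assms by (rule add_mono)
  finally show ?thesis .
qed

lemma p_weak_upper_gradient_zero_if_AE_eq:
  assumes sets_\<mu>: "sets \<mu> = sets borel" and "non_atomic \<mu>"
    and sets_m: "sets m = sets borel" and "0 < p"
    and \<Gamma>s: "\<Gamma>s \<subseteq> Gamma_mu \<mu>" and subpath_closed: "\<And>P Q. P \<in> \<Gamma>s \<Longrightarrow> Q \<in> nontriv_subpaths P \<Longrightarrow> Q \<in> \<Gamma>s"
    and f: "p_weak_upper_gradient \<mu> m p \<Gamma>s f \<rho>\<^sub>f" "(\<integral>\<^sup>+x. enn_powr (\<rho>\<^sub>f x) p \<partial>m) < \<infinity>"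
    and g: "p_weak_upper_gradient \<mu> m p \<Gamma>s g \<rho>\<^sub>g" "(\<integral>\<^sup>+x. enn_powr (\<rho>\<^sub>g x) p \<partial>m) < \<infinity>"
    and "AE x in m. f x = g x"
  shows "p_weak_upper_gradient \<mu> m p \<Gamma>s (\<lambda>x. f x - g x) (\<lambda>x. 0)"
proof -
  obtain E\<^sub>f where E\<^sub>f: "p_modulus \<mu> m p E\<^sub>f = 0"
      "\<And>P. P \<in> \<Gamma>s - E\<^sub>f \<Longrightarrow> ennreal \<bar>f (start_pt P) - f (end_pt P)\<bar> \<le> line_int \<mu> \<rho>\<^sub>f P"
    and \<rho>\<^sub>f: "\<rho>\<^sub>f \<in> borel_measurable borel"
    using f(1) unfolding p_weak_upper_gradient_def by blast
  obtain E\<^sub>g where E\<^sub>g: "p_modulus \<mu> m p E\<^sub>g = 0"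
      "\<And>P. P \<in> \<Gamma>s - E\<^sub>g \<Longrightarrow> ennreal \<bar>g (start_pt P) - g (end_pt P)\<bar> \<le> line_int \<mu> \<rho>\<^sub>g P"
    and \<rho>\<^sub>g: "\<rho>\<^sub>g \<in> borel_measurable borel"
    using g(1) unfolding p_weak_upper_gradient_def by blast
  obtain N where N: "{x \<in> space m. f x \<noteq> g x} \<subseteq> N" "emeasure m N = 0" "N \<in> sets m"
    using \<open>AE x in m. f x = g x\<close> by (rule AE_E)
  have f_eq_g: "f x = g x" if "x \<notin> N" for x
    using N(1) that sets_eq_imp_space_eq[OF sets_m] by auto
  define E where "E = \<Gamma>s \<inter> ({P. \<exists>Q\<in>nontriv_subpaths P. Q \<in> E\<^sub>f} \<union> {P. \<exists>Q\<in>nontriv_subpaths P. Q \<in> E\<^sub>g}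
     \<union> {P. is_path P \<and> emeasure \<mu> (path_image_g P \<inter> N) \<noteq> 0}
     \<union> {P. is_path P \<and> line_int \<mu> \<rho>\<^sub>f P = \<infinity>} \<union> {P. is_path P \<and> line_int \<mu> \<rho>\<^sub>g P = \<infinity>})"
  have "p_modulus \<mu> m p ({P. \<exists>Q\<in>nontriv_subpaths P. Q \<in> E\<^sub>f} \<union> {P. \<exists>Q\<in>nontriv_subpaths P. Q \<in> E\<^sub>g}
     \<union> {P. is_path P \<and> emeasure \<mu> (path_image_g P \<inter> N) \<noteq> 0}
     \<union> {P. is_path P \<and> line_int \<mu> \<rho>\<^sub>f P = \<infinity>} \<union> {P. is_path P \<and> line_int \<mu> \<rho>\<^sub>g P = \<infinity>}) = 0"
    by (intro p_modulus_Un_eq_0[OF sets_m] p_modulus_paths_with_subpath_in E\<^sub>f(1) E\<^sub>g(1)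
        p_modulus_paths_meeting_null_set[OF sets_\<mu> sets_m \<open>0 < p\<close> N(3,2)]
        p_modulus_paths_infinite_line_int[OF sets_\<mu> sets_m \<open>0 < p\<close>] \<rho>\<^sub>f \<rho>\<^sub>g f(2) g(2))
  then have "p_modulus \<mu> m p E = 0"
    unfolding E_def by (rule p_modulus_subset_eq_0) blast
  moreover have "f (start_pt P) - g (start_pt P) = 0 \<and> f (end_pt P) - g (end_pt P) = 0"
    if P: "P \<in> \<Gamma>s - E" for P
  proof -
    have "P \<in> Gamma_mu \<mu>" and path: "is_path P"
      using P \<Gamma>s by (auto simp: Gamma_mu_def)
    then have good: "emeasure \<mu> (path_image_g P \<inter> N) = 0"
        "line_int \<mu> \<rho>\<^sub>f P < \<infinity>" "line_int \<mu> \<rho>\<^sub>g P < \<infinity>"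
      using P by (auto simp: E_def less_top)
    have good_subpath: "Q \<in> \<Gamma>s - E\<^sub>f \<and> Q \<in> \<Gamma>s - E\<^sub>g" if "Q \<in> nontriv_subpaths P" for Q
      using P subpath_closed[OF _ that] that unfolding E_def by blast
    have "AE y in \<mu>. y \<notin> path_image_g P \<inter> N"
      using good(1) path_image_g_in_sets[OF sets_\<mu> path] N(3) sets_m sets_\<mu>
      by (intro AE_not_in) auto
    then have h_AE: "AE y in \<mu>. y \<in> path_image_g P \<longrightarrow> f y - g y = 0"
      by eventually_elim (use f_eq_g in auto)
    have \<rho>_sum: "(\<lambda>x. \<rho>\<^sub>f x + \<rho>\<^sub>g x) \<in> borel_measurable borel"
      using \<rho>\<^sub>f \<rho>\<^sub>g by measurable
    have ug: "ennreal \<bar>(f (start_pt Q) - g (start_pt Q)) - (f (end_pt Q) - g (end_pt Q))\<bar>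
        \<le> line_int \<mu> (\<lambda>x. \<rho>\<^sub>f x + \<rho>\<^sub>g x) Q" if "Q \<in> nontriv_subpaths P" for Q
    proof -
      have "is_path Q"
        using good_subpath[OF that] \<Gamma>s by (auto simp: Gamma_mu_def)
      then show ?thesis
        using good_subpath[OF that] E\<^sub>f(2) E\<^sub>g(2)
        by (simp add: line_int_add[OF sets_\<mu> _ \<rho>\<^sub>f \<rho>\<^sub>g] ennreal_abs_diff_diff_le)
    qed
    have fin: "line_int \<mu> (\<lambda>x. \<rho>\<^sub>f x + \<rho>\<^sub>g x) P < \<infinity>"
      using good(2,3) by (simp add: line_int_add[OF sets_\<mu> path \<rho>\<^sub>f \<rho>\<^sub>g])
    show ?thesis
      using Gamma_mu_endpoint_values_eq_0[OF sets_\<mu> \<open>non_atomic \<mu>\<close> \<rho>_sum \<open>P \<in> Gamma_mu \<mu>\<close> h_AE fin ug]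
      by blast
  qed
  ultimately show ?thesis
    unfolding p_weak_upper_gradient_def by (intro conjI exI[of _ E]) (auto simp: E_def)
qed

theorem corollary4p1:
  fixes \<mu> m :: "'a::metric_space measure" and p :: real and \<Gamma>s :: "'a gpath set"
    and f g :: "'a \<Rightarrow> real"
  assumes "borel_measure \<mu>" and "non_atomic \<mu>" and "borel_measure m"
    and "0 < p"
    and "\<Gamma>s \<subseteq> Gamma_mu \<mu>"
    and "\<And>P Q. P \<in> \<Gamma>s \<Longrightarrow> Q \<in> nontriv_subpaths P \<Longrightarrow> Q \<in> \<Gamma>s"
    and "\<And>x y. x \<noteq> y \<Longrightarrow> \<exists>P\<in>\<Gamma>s. start_pt P = x \<and> end_pt P = y"
    and "f \<in> N1p_tilde \<mu> m p \<Gamma>s" and "g \<in> N1p_tilde \<mu> m p \<Gamma>s"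
    and "AE x in m. f x = g x"
  shows "N1p_norm \<mu> m p \<Gamma>s (\<lambda>x. f x - g x) = 0"
proof (rule N1p_norm_eq_0I[OF \<open>0 < p\<close>])
  show "AE x in m. f x - g x = 0"
    using \<open>AE x in m. f x = g x\<close> by simp
  obtain \<rho>\<^sub>f \<rho>\<^sub>g where
      "p_weak_upper_gradient \<mu> m p \<Gamma>s f \<rho>\<^sub>f" "(\<integral>\<^sup>+x. enn_powr (\<rho>\<^sub>f x) p \<partial>m) < \<infinity>"
      "p_weak_upper_gradient \<mu> m p \<Gamma>s g \<rho>\<^sub>g" "(\<integral>\<^sup>+x. enn_powr (\<rho>\<^sub>g x) p \<partial>m) < \<infinity>"
    using \<open>f \<in> N1p_tilde \<mu> m p \<Gamma>s\<close> \<open>g \<in> N1p_tilde \<mu> m p \<Gamma>s\<close> unfolding N1p_tilde_def by blast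
  moreover have "sets \<mu> = sets borel" "sets m = sets borel"
    using \<open>borel_measure \<mu>\<close> \<open>borel_measure m\<close> by (simp_all add: borel_measure_def)
  ultimately show "p_weak_upper_gradient \<mu> m p \<Gamma>s (\<lambda>x. f x - g x) (\<lambda>x. 0)"
    using p_weak_upper_gradient_zero_if_AE_eq assms(2,4-6,10) by blast
qed

end
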